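(* Let $q$ be a complex number with $|q|<1$, and let $x,y$ be nonzero complex numbers such that $xq^k\neq 1$ and $yq^k\neq 1$ for all integers $k\geq 1$. Then \[ \sum_{i,j\in\mathbb{Z}} \frac{x^i y^j q^{i^2-ij+j^2}}{(xq;q)_i\,(yq;q)_j} = \frac{(q;q)_\infty\,(-xyq,\,-q/(xy),\,q^2;q^2)_\infty}{(xq,\,yq;q)_\infty}. \]
   Context: The $q$-shifted factorials are defined by $(a;q)_0=1$, $(a;q)_n=\prod_{k=0}^{n-1}(1-aq^k)$ for $n\geq 1$, $(a;q)_\infty=\prod_{k=0}^{\infty}(1-aq^k)$, and for negative subscripts $(a;q)_{-n}=1/(aq^{-n};q)_n$ for $n\geq1$ (so $1/(a;q)_{-n}=(aq^{-n};q)_n$). Products are abbreviated as $(a_1,\dots,a_m;q)_k=(a_1;q)_k\cdots(a_m;q)_k$ for $k\in\mathbb{Z}\cup\{\infty\}$. *)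

theory Defs
  imports "HOL-Analysis.Analysis"
begin

definition qpoch :: "complex \<Rightarrow> complex \<Rightarrow> nat \<Rightarrow> complex" where
  "qpoch a q n = (\<Prod>k<n. 1 - a * q ^ k)"

definition qpoch_int :: "complex \<Rightarrow> complex \<Rightarrow> int \<Rightarrow> complex" where
  "qpoch_int a q i =
     (if 0 \<le> i then qpoch a q (nat i)
      else 1 / qpoch (a * q powi i) q (nat (- i)))"

definition qpoch_inf :: "complex \<Rightarrow> complex \<Rightarrow> complex" where
  "qpoch_inf a q = (\<Prod>k. 1 - a * q ^ k)"

end

theory Submission
  imports Defs
begin

text \<open>Multiply the (i, j) term by (xq;q)_inf (yq;q)_inf. Since
  (xq;q)_inf / (xq;q)_i = (xq^(i+1);q)_inf, Euler's expansion
  (a;q)_inf = sum_k (-1)^k q^(k(k-1)/2) a^k / (q;q)_k turns the double sum into an absolutely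
  convergent four-fold sum over i, j, k, l, which we regroup by a = i + k and b = j + l.
  For fixed a, b, k the sum over l is again an Euler series, (q^(1+a-b-k);q)_inf, which
  vanishes for k > a - b; the remaining finite sum over k is a q-binomial sum equal to
  (q^(1-r);q)_r / (q;q)_r with r = a - b, which is zero unless a = b. What survives is
  (q;q)_inf sum_a (xy)^a q^(a^2), and the Jacobi triple product evaluates this theta series.
  The triple product itself is proved for |z| > |q| by multiplying the theta series with the
  series of 1 / (-q/z;q^2)_inf and resumming, and extended to all z \<noteq> 0 by the functional
  equation F(z) = z q F(z q^2) satisfied by both sides.\<close>

section \<open>Series over products and over the integers\<close>

lemma Suc_choose_two: "Suc k choose 2 = (k choose 2) + k"
  by (simp add: numeral_2_eq_2)

lemma two_times_choose_two: "2 * (n choose 2) + n = n ^ 2"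
  by (induction n) (simp_all add: Suc_choose_two power2_eq_square)

lemma summable_power_mult_power_choose_two:
  fixes t A :: real
  assumes "0 \<le> t" "t < 1" "0 \<le> A"
  shows "summable (\<lambda>k. A ^ k * t ^ (k choose 2))"
proof -
  have "(\<lambda>k. A * t ^ k) \<longlonglongrightarrow> A * 0"
    by (intro tendsto_mult tendsto_const LIMSEQ_realpow_zero) (use assms in auto)
  then have "eventually (\<lambda>k. A * t ^ k < 1/2) sequentially"
    by (intro order_tendstoD(2)) auto
  then obtain N where N: "\<And>k. k \<ge> N \<Longrightarrow> A * t ^ k < 1/2"
    by (auto simp: eventually_sequentially)
  show ?thesis
  proof (rule summable_ratio_test[of "1/2" N])
    fix n assume "n \<ge> N"
    have "norm (A ^ Suc n * t ^ (Suc n choose 2)) = (A ^ n * t ^ (n choose 2)) * (A * t ^ n)"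
      using assms by (simp add: Suc_choose_two power_add algebra_simps)
    also have "\<dots> \<le> (A ^ n * t ^ (n choose 2)) * (1/2)"
      by (rule mult_left_mono) (use N[OF \<open>n \<ge> N\<close>] assms in auto)
    finally show "norm (A ^ Suc n * t ^ (Suc n choose 2)) \<le> 1/2 * norm (A ^ n * t ^ (n choose 2))"
      using assms by simp
  qed simp
qed

lemma has_sum_product_abs:
  fixes f :: "'a \<Rightarrow> 'c::{real_normed_field, banach}" and g :: "'b \<Rightarrow> 'c"
  assumes fS: "(f has_sum S) A" and gT: "(g has_sum T) B"
    and fa: "(\<lambda>x. norm (f x)) summable_on A" and ga: "(\<lambda>y. norm (g y)) summable_on B"
  shows "((\<lambda>(x, y). f x * g y) has_sum (S * T)) (A \<times> B)"
    and "(\<lambda>z. norm ((\<lambda>(x, y). f x * g y) z)) summable_on (A \<times> B)"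
proof -
  have inner: "(\<lambda>y. norm ((\<lambda>(x, y). f x * g y) (x, y))) summable_on B" for x
    using summable_on_cmult_right[OF ga, of "norm (f x)"] by (simp add: norm_mult)
  have "(\<lambda>x. norm (\<Sum>\<^sub>\<infinity>y\<in>B. norm ((\<lambda>(x, y). f x * g y) (x, y)))) summable_on A"
    using summable_on_cmult_left[OF fa, of "\<Sum>\<^sub>\<infinity>y\<in>B. norm (g y)"]
    by (simp add: norm_mult infsum_cmult_right' abs_mult infsum_nonneg)
  with inner show abs: "(\<lambda>z. norm ((\<lambda>(x, y). f x * g y) z)) summable_on (A \<times> B)"
    by (intro Infinite_Sum.abs_summable_on_Sigma_iff[THEN iffD2]) auto
  show "((\<lambda>(x, y). f x * g y) has_sum (S * T)) (A \<times> B)"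
  proof (rule has_sum_SigmaI)
    show "((\<lambda>y. (\<lambda>(x, y). f x * g y) (x, y)) has_sum (f x * T)) B" for x
      using has_sum_cmult_right[OF gT, of "f x"] by simp
    show "((\<lambda>x. f x * T) has_sum S * T) A"
      by (rule has_sum_cmult_left[OF fS])
    show "(\<lambda>(x, y). f x * g y) summable_on (A \<times> B)"
      by (rule abs_summable_summable[OF abs])
  qed
qed

lemma summable_on_product_nonneg:
  fixes f :: "'a \<Rightarrow> real" and g :: "'b \<Rightarrow> real"
  assumes "f summable_on A" and "g summable_on B" and "\<And>x. f x \<ge> 0" and "\<And>y. g y \<ge> 0"
  shows "(\<lambda>(x, y). f x * g y) summable_on (A \<times> B)"
proof -
  have "(\<lambda>z. norm ((\<lambda>(x, y). f x * g y) z)) summable_on (A \<times> B)"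
    using assms by (intro has_sum_product_abs(2)[OF has_sum_infsum has_sum_infsum]) simp_all
  moreover have "(\<lambda>z. norm ((\<lambda>(x, y). f x * g y) z)) = (\<lambda>(x, y). f x * g y)"
    using assms(3,4) by (auto simp: abs_mult)
  ultimately show ?thesis by simp
qed

lemma has_sum_int_from_nat:
  fixes h :: "int \<Rightarrow> 'a::topological_comm_monoid_add"
  assumes "((\<lambda>n. h (int n)) has_sum S) UNIV" and "\<And>k. k < 0 \<Longrightarrow> h k = 0"
  shows "(h has_sum S) UNIV"
proof -
  have "(h has_sum S) (range int)"
    using assms(1) by (subst has_sum_reindex) (auto simp: o_def)
  moreover have "h k = 0" if "k \<notin> range int" for k
    using that assms(2) by (metis nonneg_int_cases not_less rangeI)
  ultimately show ?thesis
    by (rule has_sum_cong_neutral[THEN iffD1, rotated -1]) auto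
qed

lemma int_cases_range: "UNIV = range int \<union> range (\<lambda>n. - int (Suc n))"
proof -
  have "x \<in> range int \<or> x \<in> range (\<lambda>n. - int (Suc n))" for x :: int
  proof (cases "x \<ge> 0")
    case False
    then have "x = - int (Suc (nat (- x - 1)))" by simp
    then show ?thesis by blast
  qed (metis nonneg_int_cases rangeI)
  then show ?thesis by blast
qed

lemma summable_on_int_split:
  fixes g :: "int \<Rightarrow> 'a::banach"
  assumes "(\<lambda>n. g (int n)) summable_on UNIV" and "(\<lambda>n. g (- int (Suc n))) summable_on UNIV"
  shows "g summable_on UNIV"
proof -
  have "g summable_on range int"
    using summable_on_reindex[of int UNIV g] assms(1) by (simp add: o_def)
  moreover have "g summable_on range (\<lambda>n. - int (Suc n))"
    using summable_on_reindex[of "\<lambda>n. - int (Suc n)" UNIV g] assms(2) by (simp add: o_def inj_on_def)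
  ultimately have "g summable_on (range int \<union> range (\<lambda>n. - int (Suc n)))"
    by (rule summable_on_Un_disjoint) auto
  then show ?thesis by (simp only: int_cases_range[symmetric])
qed

lemma summable_on_theta_real:
  fixes r A :: real
  assumes "0 \<le> r" "r < 1" "0 < A"
  shows "(\<lambda>m::int. A powi m * r powi (m ^ 2)) summable_on UNIV"
proof -
  have sq: "summable (\<lambda>n. B ^ n * r ^ (n ^ 2))" if "0 \<le> B" for B :: real
  proof -
    have "summable (\<lambda>n. (B * r) ^ n * (r ^ 2) ^ (n choose 2))"
      using assms that by (intro summable_power_mult_power_choose_two) (auto simp: power_less_one_iff)
    moreover have "(B * r) ^ n * (r ^ 2) ^ (n choose 2) = B ^ n * r ^ (n ^ 2)" for n
      by (simp flip: two_times_choose_two add: power_mult_distrib power_mult power_add mult_ac)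
    ultimately show ?thesis by simp
  qed
  show ?thesis
  proof (rule summable_on_int_split)
    have "A powi (int n) * r powi ((int n)\<^sup>2) = A ^ n * r ^ (n ^ 2)" for n
      by (metis of_nat_power power_int_of_nat)
    then show "(\<lambda>n. A powi (int n) * r powi ((int n)\<^sup>2)) summable_on UNIV"
      using sq[of A] assms by (simp add: summable_on_UNIV_nonneg_real_iff)
    have "A powi (- int (Suc n)) * r powi ((- int (Suc n))\<^sup>2) = (1 / A) ^ Suc n * r ^ (Suc n ^ 2)" for n
    proof -
      have "A powi (- int (Suc n)) = (1 / A) ^ Suc n"
        by (simp only: power_int_minus power_int_of_nat power_one_over inverse_eq_divide)
      moreover have "r powi ((- int (Suc n))\<^sup>2) = r ^ (Suc n ^ 2)"
        by (metis power2_minus of_nat_power power_int_of_nat)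
      ultimately show ?thesis by simp
    qed
    moreover have "summable (\<lambda>n. (1 / A) ^ Suc n * r ^ (Suc n ^ 2))"
      using sq[of "1 / A"] assms by (subst summable_Suc_iff) simp
    ultimately show "(\<lambda>n. A powi (- int (Suc n)) * r powi ((- int (Suc n))\<^sup>2)) summable_on UNIV"
      using assms by (simp add: summable_on_UNIV_nonneg_real_iff)
  qed
qed

section \<open>q-shifted factorials\<close>

lemma qpoch_0 [simp]: "qpoch a q 0 = 1"
  by (simp add: qpoch_def)

lemma qpoch_Suc: "qpoch a q (Suc n) = qpoch a q n * (1 - a * q ^ n)"
  by (simp add: qpoch_def)

lemma qpoch_Suc_left: "qpoch a q (Suc n) = (1 - a) * qpoch (a * q) q n"
  unfolding qpoch_def by (subst prod.lessThan_Suc_shift) (simp add: mult.assoc)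

lemma qpoch_nonzero: "(\<And>k. a * q ^ k \<noteq> 1) \<Longrightarrow> qpoch a q n \<noteq> 0"
  by (auto simp: qpoch_def)

lemma qpoch_eq_0I: "k < n \<Longrightarrow> a * q ^ k = 1 \<Longrightarrow> qpoch a q n = 0"
  unfolding qpoch_def by (rule prod_zero) auto

lemma mult_power_neq_1:
  fixes p :: complex
  assumes "norm p < 1"
  shows "p * p ^ k \<noteq> 1"
proof
  assume "p * p ^ k = 1"
  then have "norm p ^ Suc k = 1" by (metis norm_one norm_power power_Suc)
  moreover have "norm p ^ Suc k < 1"
    using assms power_less_one_iff[of "norm p" "Suc k"] by (simp del: power_Suc)
  ultimately show False by simp
qed

lemma qpoch_qq_nonzero: "norm q < 1 \<Longrightarrow> qpoch q q n \<noteq> 0"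
  by (intro qpoch_nonzero mult_power_neq_1)

lemma convergent_prod_qpoch:
  fixes a q :: complex
  assumes "norm q < 1"
  shows "convergent_prod (\<lambda>k. 1 - a * q ^ k)"
proof -
  have "summable (\<lambda>k. norm ((1 - a * q ^ k) - 1))"
    using assms by (simp add: norm_mult norm_power summable_mult summable_geometric)
  then show ?thesis
    by (intro abs_convergent_prod_imp_convergent_prod summable_imp_abs_convergent_prod)
qed

lemma qpoch_LIMSEQ:
  assumes "norm q < 1"
  shows "(\<lambda>n. qpoch a q n) \<longlonglongrightarrow> qpoch_inf a q"
proof -
  have "(\<lambda>n. qpoch a q (Suc n)) \<longlonglongrightarrow> qpoch_inf a q"
    using convergent_prod_LIMSEQ[OF convergent_prod_qpoch[OF assms]]
    by (simp add: qpoch_def qpoch_inf_def lessThan_Suc_atMost)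
  then show ?thesis by (rule LIMSEQ_imp_Suc)
qed

lemma qpoch_inf_nonzero:
  assumes "norm q < 1" and "\<And>k. a * q ^ k \<noteq> 1"
  shows "qpoch_inf a q \<noteq> 0"
  unfolding qpoch_inf_def using assms(2)
  by (intro prodinf_nonzero convergent_prod_qpoch[OF assms(1)]) simp

lemma qpoch_inf_nonzero_small:
  assumes "norm p < 1" and "norm w < 1"
  shows "qpoch_inf w p \<noteq> 0"
proof (rule qpoch_inf_nonzero[OF assms(1)])
  show "w * p ^ k \<noteq> 1" for k
  proof -
    have "norm (w * p ^ k) \<le> norm w"
      using assms(1) by (simp add: norm_mult norm_power mult_left_le power_le_one)
    then show ?thesis
      using assms(2) by auto
  qed
qed

lemma inverse_qpoch_bounded:
  assumes "norm q < 1" and "\<And>k. a * q ^ k \<noteq> 1"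
  obtains K where "K > 0" and "\<And>n. norm (inverse (qpoch a q n)) \<le> K"
proof -
  have "(\<lambda>n. inverse (qpoch a q n)) \<longlonglongrightarrow> inverse (qpoch_inf a q)"
    by (intro tendsto_inverse qpoch_LIMSEQ qpoch_inf_nonzero assms)
  then have "Bseq (\<lambda>n. inverse (qpoch a q n))"
    by (intro convergent_imp_Bseq convergentI)
  then show ?thesis using that by (auto simp: Bseq_def)
qed

section \<open>Euler's expansions and the q-binomial theorem\<close>

definition euler_coeff :: "complex \<Rightarrow> nat \<Rightarrow> complex" where
  "euler_coeff p k = (-1) ^ k * p ^ (k choose 2) / qpoch p p k"

lemma euler_coeff_0 [simp]: "euler_coeff p 0 = 1"
  by (simp add: euler_coeff_def binomial_eq_0)

lemma euler_coeff_Suc: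
  assumes "norm p < 1"
  shows "euler_coeff p (Suc k) * (1 - p ^ Suc k) = - (p ^ k * euler_coeff p k)"
  using mult_power_neq_1[OF assms, of k] qpoch_qq_nonzero[OF assms, of k]
  by (simp add: euler_coeff_def qpoch_Suc Suc_choose_two power_add field_simps)

lemma norm_euler_coeff_le:
  assumes "norm p < 1"
  obtains C where "C > 0" and "\<And>k. norm (euler_coeff p k) \<le> C * norm p ^ (k choose 2)"
proof -
  obtain K where "K > 0" and K: "\<And>n. norm (inverse (qpoch p p n)) \<le> K"
    using inverse_qpoch_bounded[OF assms mult_power_neq_1[OF assms]] by blast
  have "norm (euler_coeff p k) \<le> K * norm p ^ (k choose 2)" for k
    using mult_right_mono[OF K[of k], of "norm p ^ (k choose 2)"]
    by (simp add: euler_coeff_def norm_mult norm_divide norm_power divide_inverse mult.commute)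
  with \<open>K > 0\<close> show ?thesis using that by blast
qed

lemma summable_norm_euler:
  assumes "norm p < 1"
  shows "summable (\<lambda>k. norm (euler_coeff p k * a ^ k))"
proof -
  obtain C where C: "\<And>k. norm (euler_coeff p k) \<le> C * norm p ^ (k choose 2)"
    using norm_euler_coeff_le[OF assms] by blast
  show ?thesis
  proof (rule summable_comparison_test')
    show "summable (\<lambda>k. C * (norm a ^ k * norm p ^ (k choose 2)))"
      using summable_power_mult_power_choose_two[of "norm p" "norm a"] assms
      by (intro summable_mult) simp
    show "norm (norm (euler_coeff p k * a ^ k)) \<le> C * (norm a ^ k * norm p ^ (k choose 2))" for k
    proof -
      have "norm (norm (euler_coeff p k * a ^ k)) = norm (euler_coeff p k) * norm a ^ k"
        by (simp add: norm_mult norm_power)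
      also have "\<dots> \<le> C * norm p ^ (k choose 2) * norm a ^ k"
        by (rule mult_right_mono[OF C]) simp
      finally show ?thesis by (simp only: mult_ac)
    qed
  qed
qed

definition euler_series :: "complex \<Rightarrow> complex \<Rightarrow> complex" where
  "euler_series p a = (\<Sum>k. euler_coeff p k * a ^ k)"

lemma euler_series_sums:
  "norm p < 1 \<Longrightarrow> (\<lambda>k. euler_coeff p k * a ^ k) sums euler_series p a"
  unfolding euler_series_def by (rule summable_sums, rule summable_norm_cancel, rule summable_norm_euler)

lemma euler_series_rec:
  assumes p: "norm p < 1"
  shows "euler_series p a = (1 - a) * euler_series p (a * p)"
proof -
  let ?t = "\<lambda>k. euler_coeff p k * a ^ k - euler_coeff p k * (a * p) ^ k"
  have "?t sums (euler_series p a - euler_series p (a * p))"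
    by (intro sums_diff euler_series_sums p)
  then have "(\<lambda>k. ?t (Suc k)) sums (euler_series p a - euler_series p (a * p))"
    by (subst sums_Suc_iff) simp
  moreover have "?t (Suc k) = - a * (euler_coeff p k * (a * p) ^ k)" for k
  proof -
    have "?t (Suc k) = (euler_coeff p (Suc k) * (1 - p ^ Suc k)) * a ^ Suc k"
      by (simp add: power_mult_distrib algebra_simps)
    also have "\<dots> = - (p ^ k * euler_coeff p k) * a ^ Suc k"
      by (simp only: euler_coeff_Suc[OF p])
    finally show ?thesis by (simp add: power_mult_distrib)
  qed
  ultimately have "(\<lambda>k. - a * (euler_coeff p k * (a * p) ^ k))
      sums (euler_series p a - euler_series p (a * p))" by simp
  moreover have "(\<lambda>k. - a * (euler_coeff p k * (a * p) ^ k)) sums (- a * euler_series p (a * p))"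
    by (intro sums_mult euler_series_sums p)
  ultimately have "euler_series p a - euler_series p (a * p) = - a * euler_series p (a * p)"
    by (rule sums_unique2)
  then show ?thesis by (simp add: algebra_simps)
qed

lemma euler_series_split:
  "norm p < 1 \<Longrightarrow> euler_series p a = qpoch a p n * euler_series p (a * p ^ n)"
proof (induction n)
  case (Suc n)
  then show ?case
    using euler_series_rec[OF Suc.prems, of "a * p ^ n"] by (metis qpoch_Suc mult.assoc power_Suc2)
qed simp

lemma qpoch_inf_eq_euler_series:
  assumes p: "norm p < 1"
  shows "qpoch_inf a p = euler_series p a"
proof -
  have "isCont (euler_series p) 0"
    unfolding euler_series_def[abs_def]
    by (rule isCont_powser_converges_everywhere, rule summable_norm_cancel, rule summable_norm_euler[OF p])
  moreover have "(\<lambda>n. a * p ^ n) \<longlonglongrightarrow> 0"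
    using tendsto_mult_right_zero[OF LIMSEQ_power_zero[OF p]] by simp
  ultimately have "(\<lambda>n. euler_series p (a * p ^ n)) \<longlonglongrightarrow> euler_series p 0"
    by (rule isCont_tendsto_compose)
  then have "(\<lambda>n. qpoch a p n * euler_series p (a * p ^ n)) \<longlonglongrightarrow> qpoch_inf a p * 1"
    by (intro tendsto_mult qpoch_LIMSEQ p) (simp add: euler_series_def)
  then have "(\<lambda>n. euler_series p a) \<longlonglongrightarrow> qpoch_inf a p"
    by (simp add: euler_series_split[OF p, symmetric])
  then show ?thesis by (simp add: LIMSEQ_const_iff)
qed

theorem has_sum_qpoch_inf:
  assumes "norm p < 1"
  shows "((\<lambda>k. euler_coeff p k * a ^ k) has_sum qpoch_inf a p) UNIV"
  unfolding qpoch_inf_eq_euler_series[OF assms]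
  by (intro norm_summable_imp_has_sum summable_norm_euler euler_series_sums assms)

lemma summable_on_norm_euler:
  "norm p < 1 \<Longrightarrow> (\<lambda>k. norm (euler_coeff p k * a ^ k)) summable_on UNIV"
  using summable_norm_euler by (simp add: summable_on_UNIV_nonneg_real_iff)

lemma qpoch_inf_split:
  "norm p < 1 \<Longrightarrow> qpoch_inf a p = qpoch a p n * qpoch_inf (a * p ^ n) p"
  by (simp add: qpoch_inf_eq_euler_series euler_series_split)

lemma qpoch_inf_rec: "norm p < 1 \<Longrightarrow> qpoch_inf a p = (1 - a) * qpoch_inf (a * p) p"
  using qpoch_inf_split[of p a 1] by (simp add: qpoch_Suc)

lemma qpoch_inf_eq_0I:
  assumes "norm p < 1" and "a * p ^ k = 1"
  shows "qpoch_inf a p = 0"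
  using qpoch_inf_split[OF assms(1), of a "Suc k"] qpoch_eq_0I[of k "Suc k" a p] assms(2) by simp

lemma qpoch_inf_power_int_nonpos:
  assumes "norm p < 1" and "p \<noteq> 0" and "m \<le> 0"
  shows "qpoch_inf (p powi m) p = 0"
proof (rule qpoch_inf_eq_0I[OF assms(1)])
  have "p ^ nat (- m) = p powi (- m)"
    using assms(3) by (simp add: power_int_def)
  then show "p powi m * p ^ nat (- m) = 1"
    using assms(2) by (simp add: power_int_minus)
qed

lemma qpoch_inf_mult_power:
  assumes "norm p < 1" and "\<And>k. a * p ^ k \<noteq> 1"
  shows "qpoch_inf (a * p ^ n) p = qpoch_inf a p / qpoch a p n"
  using qpoch_inf_split[OF assms(1), of a n] qpoch_nonzero[OF assms(2), of n] by (simp add: field_simps)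

lemma qpoch_inf_mult_power_int:
  assumes "norm p < 1" and "p \<noteq> 0" and "\<And>k. a * p ^ k \<noteq> 1"
  shows "qpoch_inf (a * p powi i) p = qpoch_inf a p / qpoch_int a p i"
proof (cases "0 \<le> i")
  case True
  then show ?thesis
    using qpoch_inf_mult_power[OF assms(1,3), of "nat i"] by (simp add: qpoch_int_def power_int_def)
next
  case False
  define n where "n = nat (- i)"
  have "p powi i * p ^ n = 1"
    using False assms(2) by (simp add: n_def power_int_def power_inverse field_simps)
  then have "qpoch_inf (a * p powi i) p = qpoch (a * p powi i) p n * qpoch_inf a p"
    using qpoch_inf_split[OF assms(1), of "a * p powi i" n] by (simp add: mult.assoc)
  then show ?thesis
    using False by (simp add: qpoch_int_def n_def)
qed

lemma q_binomial_sum_rec: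
  assumes q: "norm q < 1"
  shows "(\<Sum>k\<le>Suc n. euler_coeff q k * z ^ k / qpoch q q (Suc n - k)) * (1 - q ^ Suc n)
       = (1 - z) * (\<Sum>k\<le>n. euler_coeff q k * (q * z) ^ k / qpoch q q (n - k))"
proof -
  let ?S = "\<Sum>k\<le>n. euler_coeff q k * (q * z) ^ k / qpoch q q (n - k)"
  define u where "u k = (if k \<le> n then euler_coeff q k * (q * z) ^ k / qpoch q q (n - k) else 0)" for k
  define v where "v k = euler_coeff q k * z ^ k * (1 - q ^ k) / qpoch q q (Suc n - k)" for k
  \<comment> \<open>split 1 - q^(n+1) = q^k (1 - q^(n+1-k)) + (1 - q^k) termwise\<close>
  have split: "euler_coeff q k * z ^ k / qpoch q q (Suc n - k) * (1 - q ^ Suc n) = u k + v k"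
    if "k \<le> Suc n" for k
  proof (cases "k \<le> n")
    case True
    then obtain m where m: "n = k + m" by (metis le_add_diff_inverse)
    have "Suc n - k = Suc m" "n - k = m" using m by auto
    then show ?thesis
      using True qpoch_qq_nonzero[OF q, of m] qpoch_qq_nonzero[OF q, of "Suc m"]
      by (simp add: u_def v_def qpoch_Suc m power_add power_mult_distrib field_simps)
  next
    case False
    with that have "k = Suc n" by simp
    then show ?thesis by (simp add: u_def v_def)
  qed
  have "(\<Sum>k\<le>Suc n. v k) = (\<Sum>k\<le>n. v (Suc k))"
    by (simp only: sum.atMost_Suc_shift) (simp add: v_def)
  also have "\<dots> = - z * ?S"
  proof -
    have "v (Suc k) = - z * (euler_coeff q k * (q * z) ^ k / qpoch q q (n - k))" for k
    proof -
      have "v (Suc k) = (euler_coeff q (Suc k) * (1 - q ^ Suc k)) * z ^ Suc k / qpoch q q (n - k)"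
        by (simp add: v_def mult_ac)
      also have "\<dots> = - (q ^ k * euler_coeff q k) * z ^ Suc k / qpoch q q (n - k)"
        by (simp only: euler_coeff_Suc[OF q])
      finally show ?thesis by (simp add: power_mult_distrib mult_ac)
    qed
    then show ?thesis by (simp add: sum_distrib_left)
  qed
  finally have v_sum: "(\<Sum>k\<le>Suc n. v k) = - z * ?S" .
  have u_sum: "(\<Sum>k\<le>Suc n. u k) = ?S"
    by (simp add: u_def)
  have "(\<Sum>k\<le>Suc n. euler_coeff q k * z ^ k / qpoch q q (Suc n - k)) * (1 - q ^ Suc n)
      = (\<Sum>k\<le>Suc n. u k) + (\<Sum>k\<le>Suc n. v k)"
    unfolding sum_distrib_right sum.distrib[symmetric] by (rule sum.cong) (use split in auto)
  also have "\<dots> = (1 - z) * ?S"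
    unfolding u_sum v_sum by (simp add: algebra_simps)
  finally show ?thesis .
qed

theorem q_binomial_sum:
  assumes q: "norm q < 1"
  shows "(\<Sum>k\<le>n. euler_coeff q k * z ^ k / qpoch q q (n - k)) = qpoch z q n / qpoch q q n"
proof (induction n arbitrary: z)
  case (Suc n)
  let ?S = "\<Sum>k\<le>Suc n. euler_coeff q k * z ^ k / qpoch q q (Suc n - k)"
  have "?S * qpoch q q (Suc n) = (?S * (1 - q ^ Suc n)) * qpoch q q n"
    by (simp add: qpoch_Suc mult_ac)
  also have "\<dots> = (1 - z) * qpoch (q * z) q n"
    unfolding q_binomial_sum_rec[OF q] Suc.IH using qpoch_qq_nonzero[OF q, of n] by simp
  also have "\<dots> = qpoch z q (Suc n)"
    by (simp add: qpoch_Suc_left mult.commute)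
  finally show ?case
    using qpoch_qq_nonzero[OF q, of "Suc n"] by (simp add: eq_divide_eq)
qed simp

lemma q_binomial_sum_inverse_power:
  assumes q: "norm q < 1" and q0: "q \<noteq> 0"
  shows "(\<Sum>k\<le>r. euler_coeff q k * (q powi (1 - int r)) ^ k / qpoch q q (r - k)) = (if r = 0 then 1 else 0)"
proof (cases r)
  case (Suc m)
  have "q powi (1 - int r) * q ^ m = 1"
    using Suc q0 by (simp add: power_int_minus flip: power_int_of_nat power_int_add)
  then have "qpoch (q powi (1 - int r)) q r = 0"
    using Suc by (intro qpoch_eq_0I[of m]) auto
  then show ?thesis
    using Suc by (simp add: q_binomial_sum[OF q])
qed simp

lemma summable_norm_power_div_qpoch:
  assumes "norm p < 1" and "norm w < 1"
  shows "summable (\<lambda>n. norm (w ^ n / qpoch p p n))"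
proof -
  obtain K where K: "\<And>n. norm (inverse (qpoch p p n)) \<le> K"
    using inverse_qpoch_bounded[OF assms(1) mult_power_neq_1[OF assms(1)]] by blast
  show ?thesis
  proof (rule summable_comparison_test')
    show "summable (\<lambda>n. K * norm w ^ n)"
      using assms(2) by (intro summable_mult summable_geometric) simp
    show "norm (norm (w ^ n / qpoch p p n)) \<le> K * norm w ^ n" for n
      using mult_right_mono[OF K[of n], of "norm w ^ n"]
      by (simp add: norm_mult norm_power divide_inverse mult.commute)
  qed
qed

lemma summable_on_norm_power_div_qpoch:
  "norm p < 1 \<Longrightarrow> norm w < 1 \<Longrightarrow> (\<lambda>n. norm (w ^ n / qpoch p p n)) summable_on UNIV"
  using summable_norm_power_div_qpoch by (simp add: summable_on_UNIV_nonneg_real_iff)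

theorem has_sum_inverse_qpoch_inf:
  assumes p: "norm p < 1" and w: "norm w < 1"
  shows "((\<lambda>n. w ^ n / qpoch p p n) has_sum inverse (qpoch_inf w p)) UNIV"
proof -
  let ?G = "\<Sum>n. w ^ n / qpoch p p n"
  have "(\<lambda>k. \<Sum>i\<le>k. (euler_coeff p i * w ^ i) * (w ^ (k - i) / qpoch p p (k - i)))
      sums (qpoch_inf w p * ?G)"
    unfolding qpoch_inf_eq_euler_series[OF p] euler_series_def
    by (rule Cauchy_product_sums[OF summable_norm_euler[OF p] summable_norm_power_div_qpoch[OF p w]])
  moreover have "(\<Sum>i\<le>k. (euler_coeff p i * w ^ i) * (w ^ (k - i) / qpoch p p (k - i)))
      = (if k = 0 then 1 else 0)" for k
  proof -
    have "(\<Sum>i\<le>k. (euler_coeff p i * w ^ i) * (w ^ (k - i) / qpoch p p (k - i)))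
        = w ^ k * (\<Sum>i\<le>k. euler_coeff p i * 1 ^ i / qpoch p p (k - i))"
      unfolding sum_distrib_left by (rule sum.cong) (auto simp: power_add[symmetric])
    also have "\<dots> = w ^ k * (qpoch 1 p k / qpoch p p k)"
      by (simp only: q_binomial_sum[OF p])
    also have "\<dots> = (if k = 0 then 1 else 0)"
      by (cases k) (simp_all add: qpoch_Suc_left)
    finally show ?thesis .
  qed
  ultimately have "(\<lambda>k. if k = 0 then 1 else 0) sums (qpoch_inf w p * ?G)"
    by simp
  then have "qpoch_inf w p * ?G = 1"
    using sums_single[of 0 "\<lambda>_. 1 :: complex"] sums_unique2 by fastforce
  then have "?G = inverse (qpoch_inf w p)"
    by (metis inverse_unique)
  moreover have "(\<lambda>n. w ^ n / qpoch p p n) sums ?G"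
    by (rule summable_sums, rule summable_norm_cancel, rule summable_norm_power_div_qpoch[OF p w])
  ultimately show ?thesis
    using norm_summable_imp_has_sum[OF summable_norm_power_div_qpoch[OF p w]] by simp
qed

section \<open>The Jacobi triple product\<close>

definition theta :: "complex \<Rightarrow> complex \<Rightarrow> complex" where
  "theta q z = (\<Sum>\<^sub>\<infinity>m::int. z powi m * q powi (m ^ 2))"

lemma summable_on_norm_theta:
  fixes q z :: complex
  assumes "norm q < 1" and "z \<noteq> 0"
  shows "(\<lambda>m::int. norm (z powi m * q powi (m ^ 2))) summable_on UNIV"
  using summable_on_theta_real[of "norm q" "norm z"] assms by (simp add: norm_mult norm_power_int)

lemma has_sum_theta:
  fixes q z :: complex
  assumes "norm q < 1" and "z \<noteq> 0"
  shows "((\<lambda>m::int. z powi m * q powi (m ^ 2)) has_sum theta q z) UNIV"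
  unfolding theta_def
  by (rule has_sum_infsum, rule abs_summable_summable, rule summable_on_norm_theta[OF assms])

lemma has_sum_diagonal_theta:
  fixes q u c :: complex
  assumes "norm q < 1" and "u \<noteq> 0"
  shows "((\<lambda>(a, b). if a = b then u powi a * q powi (a ^ 2) * c else 0) has_sum (theta q u * c)) UNIV"
proof -
  have "(((\<lambda>(a, b). if a = b then u powi a * q powi (a ^ 2) * c else 0) \<circ> (\<lambda>a. (a, a)))
      has_sum (theta q u * c)) UNIV"
    using has_sum_cmult_left[OF has_sum_theta[OF assms]] by (simp add: o_def)
  then have "((\<lambda>(a, b). if a = b then u powi a * q powi (a ^ 2) * c else 0) has_sum (theta q u * c))
      (range (\<lambda>a. (a, a)))"
    by (subst has_sum_reindex) (auto simp: inj_on_def)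
  then show ?thesis
    by (rule has_sum_cong_neutral[THEN iffD1, rotated -1]) auto
qed

lemma theta_shift:
  assumes q: "norm q < 1" and q0: "q \<noteq> 0" and z: "z \<noteq> 0"
  shows "theta q z = z * q * theta q (z * q ^ 2)"
proof -
  define f where "f m = z powi m * q powi (m ^ 2)" for m :: int
  have "((\<lambda>m. f (m + 1)) has_sum theta q z) UNIV \<longleftrightarrow> (f has_sum theta q z) UNIV"
    by (rule has_sum_reindex_bij_witness[where i = "\<lambda>m. m - 1" and j = "\<lambda>m. m + 1"]) simp_all
  moreover have "(f has_sum theta q z) UNIV"
    unfolding f_def by (rule has_sum_theta[OF q z])
  ultimately have shifted: "((\<lambda>m. f (m + 1)) has_sum theta q z) UNIV"
    by simp
  have "f (m + 1) = z * q * ((z * q ^ 2) powi m * q powi (m ^ 2))" for m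
  proof -
    have "(m + 1) ^ 2 = (m ^ 2 + 2 * m) + 1"
      by (simp add: power2_eq_square algebra_simps)
    then have "f (m + 1) = z * z powi m * (q powi (m ^ 2) * q powi (2 * m) * q)"
      by (simp only: f_def power_int_add_1'[OF disjI1[OF z]] power_int_add_1[OF disjI1[OF q0]]
          power_int_add[OF disjI1[OF q0]])
         simp
    also have "q powi (2 * m) = (q ^ 2) powi m"
      by (simp add: power_int_power)
    finally show ?thesis
      by (simp only: power_int_mult_distrib mult_ac)
  qed
  with shifted have "((\<lambda>m. z * q * ((z * q ^ 2) powi m * q powi (m ^ 2))) has_sum theta q z) UNIV"
    by simp
  moreover have "((\<lambda>m. z * q * ((z * q ^ 2) powi m * q powi (m ^ 2)))
      has_sum (z * q * theta q (z * q ^ 2))) UNIV"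
    using z q0 by (intro has_sum_cmult_right has_sum_theta q) simp
  ultimately show ?thesis
    by (rule has_sum_unique)
qed

lemma theta_term_times_inverse_euler_term:
  fixes q z :: complex
  assumes q0: "q \<noteq> 0" and z0: "z \<noteq> 0"
  shows "z powi (k + int n) * q powi ((k + int n) ^ 2) * ((- q / z) ^ n / qpoch (q ^ 2) (q ^ 2) n)
       = z powi k * q powi (k ^ 2) * (euler_coeff (q ^ 2) n * (q powi (2 * k + 2)) ^ n)"
proof -
  have exponent: "(k + int n) ^ 2 + int n = k ^ 2 + 2 * int (n choose 2) + (2 * k + 2) * int n"
    using arg_cong[OF two_times_choose_two[of n], of int]
    by (simp add: algebra_simps power2_eq_square)
  have q_part: "q powi ((k + int n) ^ 2) * q ^ n
      = q powi (k ^ 2) * (q ^ 2) ^ (n choose 2) * (q powi (2 * k + 2)) ^ n"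
  proof -
    have "q powi ((k + int n) ^ 2) * q ^ n = q powi ((k + int n) ^ 2 + int n)"
      by (simp only: power_int_add[OF disjI1[OF q0]] power_int_of_nat)
    also have "\<dots> = q powi (k ^ 2) * q powi (2 * int (n choose 2)) * q powi ((2 * k + 2) * int n)"
      by (simp only: exponent power_int_add[OF disjI1[OF q0]])
    also have "q powi (2 * int (n choose 2)) = (q ^ 2) ^ (n choose 2)"
    proof -
      have "2 * int (n choose 2) = int (2 * (n choose 2))"
        by simp
      then show ?thesis
        by (simp only: power_int_of_nat power_mult)
    qed
    finally show ?thesis
      by (simp only: power_int_power')
  qed
  have z_part: "z powi (k + int n) = z powi k * z ^ n"
    by (simp only: power_int_add[OF disjI1[OF z0]] power_int_of_nat)
  have "- q / z = (-1) * (q / z)"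
    by simp
  then have "(- q / z) ^ n = (-1) ^ n * q ^ n / z ^ n"
    by (simp only: power_mult_distrib power_divide times_divide_eq_right)
  then have "z powi (k + int n) * q powi ((k + int n) ^ 2) * ((- q / z) ^ n / qpoch (q ^ 2) (q ^ 2) n)
      = z powi k * (-1) ^ n * (q powi ((k + int n) ^ 2) * q ^ n) / qpoch (q ^ 2) (q ^ 2) n"
    using z0 by (simp add: z_part field_simps)
  also have "\<dots> = z powi k * q powi (k ^ 2) * (euler_coeff (q ^ 2) n * (q powi (2 * k + 2)) ^ n)"
    by (simp only: q_part euler_coeff_def) (simp add: mult_ac)
  finally show ?thesis .
qed

lemma has_sum_theta_terms_qpoch_inf:
  fixes q z :: complex
  assumes q: "norm q < 1" and q0: "q \<noteq> 0"
  shows "((\<lambda>k. z powi k * q powi (k ^ 2) * qpoch_inf ((q ^ 2) powi (k + 1)) (q ^ 2))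
          has_sum (qpoch_inf (- z * q) (q ^ 2) * qpoch_inf (q ^ 2) (q ^ 2))) UNIV"
proof -
  define p where "p = q ^ 2"
  have p: "norm p < 1" and p0: "p \<noteq> 0"
    using q q0 by (simp_all add: p_def norm_power power_less_one_iff)
  have "((\<lambda>k. z powi k * q powi (k ^ 2) * qpoch_inf (p powi (k + 1)) p)
      has_sum (qpoch_inf (- z * q) p * qpoch_inf p p)) UNIV"
  proof (rule has_sum_int_from_nat)
    have "z powi int n * q powi (int n ^ 2) * qpoch_inf (p powi (int n + 1)) p
        = euler_coeff p n * (- z * q) ^ n * qpoch_inf p p" for n
    proof -
      have "p powi (int n + 1) = p * p ^ n"
        by (simp add: power_int_add_1' p0)
      then have "qpoch_inf (p powi (int n + 1)) p = qpoch_inf p p / qpoch p p n"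
        using qpoch_inf_mult_power[OF p mult_power_neq_1[OF p], of n] by simp
      moreover have "p ^ (n choose 2) * q ^ n = q ^ (n ^ 2)"
        unfolding p_def by (simp add: power_mult[symmetric] power_add[symmetric] two_times_choose_two)
      moreover have "(- z * q) ^ n = (-1) ^ n * z ^ n * q ^ n"
        by (metis mult_minus1 power_mult_distrib)
      ultimately show ?thesis
        by (simp add: euler_coeff_def field_simps flip: of_nat_power)
    qed
    then show "((\<lambda>n. z powi int n * q powi (int n ^ 2) * qpoch_inf (p powi (int n + 1)) p)
        has_sum (qpoch_inf (- z * q) p * qpoch_inf p p)) UNIV"
      using has_sum_cmult_left[OF has_sum_qpoch_inf[OF p]] by simp
    show "z powi k * q powi (k ^ 2) * qpoch_inf (p powi (k + 1)) p = 0" if "k < 0" for k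
      using qpoch_inf_power_int_nonpos[OF p p0, of "k + 1"] that by simp
  qed
  then show ?thesis
    unfolding p_def .
qed

lemma jacobi_triple_product_large:
  fixes q z :: complex
  assumes q: "norm q < 1" and q0: "q \<noteq> 0" and zq: "norm q < norm z"
  shows "theta q z = qpoch_inf (q ^ 2) (q ^ 2) * qpoch_inf (- z * q) (q ^ 2) * qpoch_inf (- q / z) (q ^ 2)"
proof -
  define p where "p = q ^ 2"
  have p: "norm p < 1"
    using q by (simp add: p_def norm_power power_less_one_iff)
  have z0: "z \<noteq> 0"
    using zq by auto
  define w where "w = - q / z"
  have w: "norm w < 1"
    using zq z0 by (simp add: w_def norm_divide divide_less_eq)
  define f where "f m = z powi m * q powi (m ^ 2)" for m :: int
  define g where "g n = w ^ n / qpoch p p n" for n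
  have "((\<lambda>(m, n). f m * g n) has_sum (theta q z * inverse (qpoch_inf w p))) (UNIV \<times> UNIV)"
    unfolding f_def g_def
    by (rule has_sum_product_abs(1)[OF has_sum_theta[OF q z0] has_sum_inverse_qpoch_inf[OF p w]
          summable_on_norm_theta[OF q z0] summable_on_norm_power_div_qpoch[OF p w]])
  moreover have "((\<lambda>(k, n). f (k + int n) * g n) has_sum (theta q z * inverse (qpoch_inf w p))) (UNIV \<times> UNIV)
      \<longleftrightarrow> ((\<lambda>(m, n). f m * g n) has_sum (theta q z * inverse (qpoch_inf w p))) (UNIV \<times> UNIV)"
    by (rule has_sum_reindex_bij_witness[where i = "\<lambda>(m, n). (m - int n, n)" and j = "\<lambda>(k, n). (k + int n, n)"])
       (simp_all add: split_beta)
  ultimately have double: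
    "((\<lambda>(k, n). f (k + int n) * g n) has_sum (theta q z * inverse (qpoch_inf w p))) (UNIV \<times> UNIV)"
    by simp
  have "((\<lambda>n. f (k + int n) * g n) has_sum (f k * qpoch_inf (p powi (k + 1)) p)) UNIV" for k
  proof -
    have "q powi (2 * k + 2) = p powi (k + 1)"
      by (simp add: p_def power_int_power algebra_simps)
    then have "f (k + int n) * g n = f k * (euler_coeff p n * (p powi (k + 1)) ^ n)" for n
      using theta_term_times_inverse_euler_term[OF q0 z0, of k n] by (simp add: f_def g_def w_def p_def)
    then show ?thesis
      using has_sum_cmult_right[OF has_sum_qpoch_inf[OF p], of "f k"] by simp
  qed
  then have "((\<lambda>k. f k * qpoch_inf (p powi (k + 1)) p) has_sum (theta q z * inverse (qpoch_inf w p))) UNIV"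
    by (intro has_sum_Sigma'[OF double[folded UNIV_Times_UNIV]]) auto
  moreover have "((\<lambda>k. f k * qpoch_inf (p powi (k + 1)) p) has_sum (qpoch_inf (- z * q) p * qpoch_inf p p)) UNIV"
    unfolding f_def p_def by (rule has_sum_theta_terms_qpoch_inf[OF q q0])
  ultimately have "theta q z * inverse (qpoch_inf w p) = qpoch_inf (- z * q) p * qpoch_inf p p"
    by (rule has_sum_unique)
  moreover have "qpoch_inf w p \<noteq> 0"
    by (rule qpoch_inf_nonzero_small[OF p w])
  ultimately have "theta q z = qpoch_inf p p * qpoch_inf (- z * q) p * qpoch_inf w p"
    by (simp add: field_simps)
  then show ?thesis
    by (simp add: p_def w_def)
qed

lemma triple_product_shift:
  fixes q w :: complex
  assumes q: "norm q < 1" and q0: "q \<noteq> 0" and w0: "w \<noteq> 0"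
  shows "qpoch_inf (q ^ 2) (q ^ 2) * qpoch_inf (- w * q) (q ^ 2) * qpoch_inf (- q / w) (q ^ 2)
       = w * q * (qpoch_inf (q ^ 2) (q ^ 2) * qpoch_inf (- (w * q ^ 2) * q) (q ^ 2)
           * qpoch_inf (- q / (w * q ^ 2)) (q ^ 2))"
proof -
  have p: "norm (q ^ 2) < 1"
    using q by (simp add: norm_power power_less_one_iff)
  have "- w * q * q ^ 2 = - (w * q ^ 2) * q"
    by (simp add: mult_ac)
  then have right: "qpoch_inf (- w * q) (q ^ 2) = (1 + w * q) * qpoch_inf (- (w * q ^ 2) * q) (q ^ 2)"
    using qpoch_inf_rec[OF p, of "- w * q"] by (simp only:) simp
  have "- q / (w * q ^ 2) * q ^ 2 = - q / w" and "1 - - q / (w * q ^ 2) = 1 + 1 / (w * q)"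
    using q0 by (simp_all add: power2_eq_square field_simps)
  then have left: "qpoch_inf (- q / (w * q ^ 2)) (q ^ 2) = (1 + 1 / (w * q)) * qpoch_inf (- q / w) (q ^ 2)"
    using qpoch_inf_rec[OF p, of "- q / (w * q ^ 2)"] by (simp only:)
  let ?A = "qpoch_inf (q ^ 2) (q ^ 2)" and ?B = "qpoch_inf (- (w * q ^ 2) * q) (q ^ 2)"
    and ?C = "qpoch_inf (- q / w) (q ^ 2)"
  have "w * q * (?A * ?B * ((1 + 1 / (w * q)) * ?C)) = ?A * ?B * ?C * (w * q * (1 + 1 / (w * q)))"
    by (simp only: mult_ac)
  also have "w * q * (1 + 1 / (w * q)) = 1 + w * q"
    using q0 w0 by (simp add: field_simps)
  finally show ?thesis
    unfolding right left by (simp only: mult_ac)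
qed

theorem jacobi_triple_product:
  fixes q z :: complex
  assumes q: "norm q < 1" and q0: "q \<noteq> 0" and z0: "z \<noteq> 0"
  shows "theta q z = qpoch_inf (q ^ 2) (q ^ 2) * qpoch_inf (- z * q) (q ^ 2) * qpoch_inf (- q / z) (q ^ 2)"
proof -
  define R where "R u = qpoch_inf (q ^ 2) (q ^ 2) * qpoch_inf (- u * q) (q ^ 2) * qpoch_inf (- q / u) (q ^ 2)"
    for u
  have reduce: "theta q z = R z" if "norm q ^ (2 * N + 1) < norm z" for N z
    using that
  proof (induction N arbitrary: z)
    case 0
    then show ?case
      using jacobi_triple_product_large[OF q q0] by (simp add: R_def)
  next
    case (Suc N)
    define w where "w = z / q ^ 2"
    have z0': "z \<noteq> 0"
      using Suc.prems by (metis norm_zero norm_ge_zero zero_le_power not_less)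
    have wz: "w * q ^ 2 = z" and w0: "w \<noteq> 0"
      using q0 z0' by (simp_all add: w_def)
    have "norm q ^ (2 * Suc N + 1) = norm q ^ (2 * N + 1) * norm q ^ 2"
      by (simp only: power_add[symmetric]) simp
    moreover have "norm z = norm w * norm q ^ 2"
      using wz by (metis norm_mult norm_power)
    ultimately have "norm q ^ (2 * N + 1) * norm q ^ 2 < norm w * norm q ^ 2"
      using Suc.prems by (simp only:)
    then have "theta q w = R w"
      by (intro Suc.IH) (simp add: mult_less_cancel_right)
    moreover have "theta q w = w * q * theta q z"
      using theta_shift[OF q q0 w0] unfolding wz .
    moreover have "R w = w * q * R z"
      using triple_product_shift[OF q q0 w0] unfolding wz R_def .
    ultimately show ?case
      using w0 q0 by simp
  qed
  have "(\<lambda>n. norm q ^ n) \<longlonglongrightarrow> 0"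
    by (rule LIMSEQ_realpow_zero) (use q in auto)
  then have "eventually (\<lambda>n. norm q ^ n < norm z) sequentially"
    by (rule order_tendstoD(2)) (use z0 in simp)
  then obtain N where "norm q ^ N < norm z"
    by (auto simp: eventually_sequentially)
  moreover have "norm q ^ (2 * N + 1) \<le> norm q ^ N"
    using q by (intro power_decreasing) auto
  ultimately have "norm q ^ (2 * N + 1) < norm z"
    by linarith
  then have "theta q z = R z"
    by (rule reduce)
  then show ?thesis
    by (simp add: R_def)
qed

section \<open>The double sum\<close>

text \<open>The (k, l) term of x^i y^j q^(i^2 - ij + j^2) (xq^(i+1);q)_inf (yq^(j+1);q)_inf expanded by
  Euler's series, written in the variables a = i + k, b = j + l.\<close>
definition double_euler_term :: "complex \<Rightarrow> complex \<Rightarrow> complex \<Rightarrow> int \<Rightarrow> int \<Rightarrow> nat \<Rightarrow> nat \<Rightarrow> complex"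
  where "double_euler_term q x y a b k l =
    x powi a * y powi b * q powi (a ^ 2 - a * b + b ^ 2) * euler_coeff q k * euler_coeff q l
      * q powi (int k * (b - a + 1) + int l * (a - b + 1) - int k * int l)"

lemma double_euler_term_reindex:
  fixes q x y :: complex
  assumes q0: "q \<noteq> 0" and x0: "x \<noteq> 0" and y0: "y \<noteq> 0"
  shows "double_euler_term q x y (i + int k) (j + int l) k l
    = (x powi i * y powi j * q powi (i ^ 2 - i * j + j ^ 2)) *
      ((euler_coeff q k * (x * q powi (i + 1)) ^ k) * (euler_coeff q l * (y * q powi (j + 1)) ^ l))"
proof -
  define Q where "Q = (i + int k) ^ 2 - (i + int k) * (j + int l) + (j + int l) ^ 2"
  define L where "L = int k * ((j + int l) - (i + int k) + 1) + int l * ((i + int k) - (j + int l) + 1)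
    - int k * int l"
  have "Q + L = (i ^ 2 - i * j + j ^ 2) + (i + 1) * int k + (j + 1) * int l"
    unfolding Q_def L_def by (simp add: algebra_simps power2_eq_square)
  then have q_part: "q powi Q * q powi L
      = q powi (i ^ 2 - i * j + j ^ 2) * q powi ((i + 1) * int k) * q powi ((j + 1) * int l)"
    by (simp only: power_int_add[OF disjI1[OF q0], symmetric])
  have x_part: "x powi (i + int k) = x powi i * x ^ k" and y_part: "y powi (j + int l) = y powi j * y ^ l"
    by (simp_all only: power_int_add[OF disjI1[OF x0]] power_int_add[OF disjI1[OF y0]] power_int_of_nat)
  have "(x * q powi (i + 1)) ^ k = x ^ k * q powi ((i + 1) * int k)"
    and "(y * q powi (j + 1)) ^ l = y ^ l * q powi ((j + 1) * int l)"
    by (simp_all only: power_mult_distrib power_int_power')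
  moreover define A where "A = x powi i * x ^ k * y powi j * y ^ l * euler_coeff q k * euler_coeff q l"
  moreover have "double_euler_term q x y (i + int k) (j + int l) k l = A * (q powi Q * q powi L)"
    unfolding double_euler_term_def Q_def[symmetric] L_def[symmetric] A_def x_part y_part
    by (simp only: mult_ac)
  ultimately show ?thesis
    unfolding q_part by (simp only: mult_ac)
qed

lemma double_euler_term_factor:
  fixes q x y :: complex
  assumes "q \<noteq> 0"
  shows "double_euler_term q x y a b k l
    = (x powi a * y powi b * q powi (a ^ 2 - a * b + b ^ 2) * euler_coeff q k * q powi (int k * (b - a + 1)))
      * (euler_coeff q l * (q powi (1 - (b - a) - int k)) ^ l)"
proof -
  have "int k * (b - a + 1) + int l * (a - b + 1) - int k * int l
      = int k * (b - a + 1) + (1 - (b - a) - int k) * int l"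
    by (simp add: algebra_simps)
  then have "q powi (int k * (b - a + 1) + int l * (a - b + 1) - int k * int l)
      = q powi (int k * (b - a + 1)) * (q powi (1 - (b - a) - int k)) ^ l"
    by (simp only: power_int_power' power_int_add[OF disjI1[OF assms]])
  then show ?thesis
    unfolding double_euler_term_def by (simp only: mult_ac)
qed

text \<open>Dropping the square shows that the term is O(|q|^((a^2 + b^2 + k + l) / 2)).\<close>

lemma double_euler_exponent:
  fixes a b :: int and k l :: nat
  shows "2 * ((a ^ 2 - a * b + b ^ 2) + (int k * (b - a + 1) + int l * (a - b + 1) - int k * int l)
            + int (k choose 2) + int (l choose 2))
       = a ^ 2 + b ^ 2 + int k + int l + (b - a + int k - int l) ^ 2"
  using arg_cong[OF two_times_choose_two[of k], of int] arg_cong[OF two_times_choose_two[of l], of int]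
  by (simp add: algebra_simps power2_eq_square)

lemma norm_double_euler_term_le:
  fixes q x y :: complex
  assumes q: "norm q < 1" and q0: "q \<noteq> 0" and "C \<ge> 0"
    and C: "\<And>k. norm (euler_coeff q k) \<le> C * norm q ^ (k choose 2)"
  shows "norm (double_euler_term q x y a b k l) \<le> C ^ 2 *
     ((norm x powi a * sqrt (norm q) powi (a ^ 2)) * (norm y powi b * sqrt (norm q) powi (b ^ 2))) *
     (sqrt (norm q) ^ k * sqrt (norm q) ^ l)"
proof -
  define t where "t = norm q"
  define r where "r = sqrt t"
  have t0: "0 < t" and r0: "0 < r" and r1: "r \<le> 1" and rt: "r ^ 2 = t"
    using q q0 by (simp_all add: t_def r_def)
  define Q where "Q = a ^ 2 - a * b + b ^ 2"
  define L where "L = int k * (b - a + 1) + int l * (a - b + 1) - int k * int l"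
  define P where "P = norm x powi a * norm y powi b * t powi Q * t powi L"
  have "P \<ge> 0"
    using t0 by (simp add: P_def)
  have "norm (double_euler_term q x y a b k l) = P * (norm (euler_coeff q k) * norm (euler_coeff q l))"
    unfolding double_euler_term_def P_def Q_def[symmetric] L_def[symmetric] t_def
    by (simp add: norm_mult norm_power_int mult_ac)
  also have "\<dots> \<le> P * ((C * t ^ (k choose 2)) * (C * t ^ (l choose 2)))"
    using C \<open>P \<ge> 0\<close> \<open>C \<ge> 0\<close> unfolding t_def by (intro mult_left_mono mult_mono) auto
  also have "\<dots> = C ^ 2 * (norm x powi a * norm y powi b)
      * t powi (Q + L + int (k choose 2) + int (l choose 2))"
    unfolding P_def using t0 by (simp add: power2_eq_square power_int_add mult_ac)
  also have "\<dots> \<le> C ^ 2 * (norm x powi a * norm y powi b) * (r powi (a ^ 2) * r powi (b ^ 2) * r ^ k * r ^ l)"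
  proof (rule mult_left_mono)
    have "t powi (Q + L + int (k choose 2) + int (l choose 2))
        = r powi (2 * (Q + L + int (k choose 2) + int (l choose 2)))"
      unfolding rt[symmetric] by (simp add: power_int_power)
    also have "\<dots> \<le> r powi (a ^ 2 + b ^ 2 + int k + int l)"
      using r0 r1 unfolding Q_def L_def double_euler_exponent by (intro power_int_decreasing) auto
    also have "\<dots> = r powi (a ^ 2) * r powi (b ^ 2) * r ^ k * r ^ l"
      using r0 by (simp add: power_int_add)
    finally show "t powi (Q + L + int (k choose 2) + int (l choose 2))
        \<le> r powi (a ^ 2) * r powi (b ^ 2) * r ^ k * r ^ l" .
  qed simp
  finally show ?thesis
    by (simp add: r_def t_def mult_ac)
qed

lemma summable_on_norm_double_euler_term:
  fixes q x y :: complex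
  assumes q: "norm q < 1" and q0: "q \<noteq> 0" and x0: "x \<noteq> 0" and y0: "y \<noteq> 0"
  shows "(\<lambda>z. norm ((\<lambda>((a, b), (k, l)). double_euler_term q x y a b k l) z)) summable_on UNIV"
proof -
  obtain C where "C > 0" and C: "\<And>k. norm (euler_coeff q k) \<le> C * norm q ^ (k choose 2)"
    using norm_euler_coeff_le[OF q] by blast
  define r where "r = sqrt (norm q)"
  have r0: "0 \<le> r" and r1: "r < 1"
    using q by (auto simp: r_def)
  define fx where "fx a = norm x powi a * r powi (a ^ 2)" for a :: int
  define fy where "fy b = norm y powi b * r powi (b ^ 2)" for b :: int
  define g where "g k = r ^ k" for k :: nat
  have nonneg: "fx a \<ge> 0" "fy b \<ge> 0" "g k \<ge> 0" for a b k
    by (simp_all add: fx_def fy_def g_def r0)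
  have "fx summable_on UNIV" "fy summable_on UNIV"
    unfolding fx_def fy_def using r0 r1 x0 y0 by (simp_all add: summable_on_theta_real)
  then have "(\<lambda>(a, b). fx a * fy b) summable_on UNIV \<times> UNIV"
    by (rule summable_on_product_nonneg) (use nonneg in auto)
  moreover have g: "g summable_on UNIV"
    unfolding g_def using summable_geometric[of r] r0 r1 by (simp add: summable_on_UNIV_nonneg_real_iff)
  have "(\<lambda>(k, l). g k * g l) summable_on UNIV \<times> UNIV"
    by (rule summable_on_product_nonneg[OF g g]) (use nonneg in auto)
  ultimately have "(\<lambda>(u, v). (\<lambda>(a, b). fx a * fy b) u * (\<lambda>(k, l). g k * g l) v)
      summable_on (UNIV \<times> UNIV) \<times> (UNIV \<times> UNIV)"
    by (rule summable_on_product_nonneg) (use nonneg in \<open>auto simp: case_prod_beta\<close>)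
  then have "(\<lambda>z. C ^ 2 * (\<lambda>(u, v). (\<lambda>(a, b). fx a * fy b) u * (\<lambda>(k, l). g k * g l) v) z)
      summable_on UNIV"
    using summable_on_cmult_right by simp
  moreover define B where "B z = C ^ 2 * (\<lambda>(u, v). (\<lambda>(a, b). fx a * fy b) u * (\<lambda>(k, l). g k * g l) v) z"
    for z :: "(int \<times> int) \<times> (nat \<times> nat)"
  moreover have B0: "B z \<ge> 0" for z
    unfolding B_def using nonneg by (auto split: prod.splits)
  ultimately have "(\<lambda>z. norm (B z)) summable_on UNIV"
    by (simp add: B_def[abs_def])
  then show ?thesis
  proof (rule Infinite_Sum.abs_summable_on_comparison_test)
    fix z :: "(int \<times> int) \<times> (nat \<times> nat)"
    obtain a b k l where z: "z = ((a, b), (k, l))"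
      by (metis prod.collapse)
    have "norm (double_euler_term q x y a b k l) \<le> B z"
      unfolding B_def z fx_def fy_def g_def r_def
      using norm_double_euler_term_le[OF q q0 less_imp_le[OF \<open>C > 0\<close>] C, of x y a b k l] by simp
    then show "norm ((\<lambda>((a, b), (k, l)). double_euler_term q x y a b k l) z) \<le> norm (B z)"
      using B0[of z] by (simp add: z)
  qed
qed

lemma has_sum_double_euler_fibre:
  fixes q x y :: complex and a b :: int
  assumes q: "norm q < 1" and q0: "q \<noteq> 0"
  shows "((\<lambda>k. (x powi a * y powi b * q powi (a ^ 2 - a * b + b ^ 2) * euler_coeff q k
                * q powi (int k * (b - a + 1))) * qpoch_inf (q powi (1 - (b - a) - int k)) q)
         has_sum (if a = b then x powi a * y powi a * q powi (a ^ 2) * qpoch_inf q q else 0)) UNIV"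
proof -
  define c where "c = x powi a * y powi b * q powi (a ^ 2 - a * b + b ^ 2)"
  define h where "h k = c * euler_coeff q k * q powi (int k * (b - a + 1))
    * qpoch_inf (q powi (1 - (b - a) - int k)) q" for k
  have h_zero: "h k = 0" if "1 - (b - a) - int k \<le> 0" for k
    using qpoch_inf_power_int_nonpos[OF q q0 that] by (simp add: h_def)
  show ?thesis
  proof (cases "b - a > 0")
    case True
    then show ?thesis
      using h_zero by (simp add: h_def[symmetric] c_def[symmetric] has_sum_0)
  next
    case False
    define r where "r = nat (a - b)"
    have r: "b - a = - int r"
      using False by (simp add: r_def)
    have "h k = c * qpoch_inf q q * (euler_coeff q k * (q powi (1 - int r)) ^ k / qpoch q q (r - k))"
      if "k \<le> r" for k
    proof -
      have "1 - (b - a) - int k = int (r - k) + 1"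
        using that r by simp
      then have "q powi (1 - (b - a) - int k) = q * q ^ (r - k)"
        by (simp only: power_int_add_1'[OF disjI1[OF q0]] power_int_of_nat)
      then have "qpoch_inf (q powi (1 - (b - a) - int k)) q = qpoch_inf q q / qpoch q q (r - k)"
        using qpoch_inf_mult_power[OF q mult_power_neq_1[OF q]] by simp
      moreover have "q powi (int k * (b - a + 1)) = (q powi (1 - int r)) ^ k"
        by (simp add: r power_int_power' mult.commute)
      ultimately show ?thesis
        by (simp add: h_def mult_ac)
    qed
    then have "(\<Sum>k\<le>r. h k)
        = c * qpoch_inf q q * (\<Sum>k\<le>r. euler_coeff q k * (q powi (1 - int r)) ^ k / qpoch q q (r - k))"
      by (simp add: sum_distrib_left)
    also have "\<dots> = c * qpoch_inf q q * (if r = 0 then 1 else 0)"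
      by (simp only: q_binomial_sum_inverse_power[OF q q0])
    also have "\<dots> = (if a = b then x powi a * y powi a * q powi (a ^ 2) * qpoch_inf q q else 0)"
      using r by (auto simp: c_def power2_eq_square)
    finally have "(\<Sum>k\<le>r. h k) = (if a = b then x powi a * y powi a * q powi (a ^ 2) * qpoch_inf q q else 0)" .
    moreover have "(h has_sum (\<Sum>k\<le>r. h k)) UNIV"
      by (rule has_sum_finite_neutralI) (use h_zero r in auto)
    ultimately have "(h has_sum (if a = b then x powi a * y powi a * q powi (a ^ 2) * qpoch_inf q q else 0)) UNIV"
      by simp
    then show ?thesis
      unfolding h_def[abs_def] c_def .
  qed
qed

lemma has_sum_double_euler_rows:
  fixes q x y :: complex
  assumes q: "norm q < 1" and q0: "q \<noteq> 0" and x0: "x \<noteq> 0" and y0: "y \<noteq> 0"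
    and x: "\<And>k. x * q * q ^ k \<noteq> 1" and y: "\<And>k. y * q * q ^ k \<noteq> 1"
  shows "((\<lambda>(i, j). x powi i * y powi j * q powi (i ^ 2 - i * j + j ^ 2)
              / (qpoch_int (x * q) q i * qpoch_int (y * q) q j)
              * (qpoch_inf (x * q) q * qpoch_inf (y * q) q))
          has_sum (\<Sum>\<^sub>\<infinity>z. (\<lambda>((a, b), (k, l)). double_euler_term q x y a b k l) z)) UNIV"
proof -
  define V where "V = (\<lambda>((a :: int, b :: int), (k :: nat, l :: nat)). double_euler_term q x y a b k l)"
  define W where "W = (\<lambda>((i :: int, j :: int), (k :: nat, l :: nat)). V ((i + int k, j + int l), (k, l)))"
  have "(V has_sum (\<Sum>\<^sub>\<infinity>z. V z)) UNIV"
    using summable_on_norm_double_euler_term[OF q q0 x0 y0]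
    unfolding V_def by (rule has_sum_infsum[OF abs_summable_summable])
  moreover have "(W has_sum (\<Sum>\<^sub>\<infinity>z. V z)) UNIV \<longleftrightarrow> (V has_sum (\<Sum>\<^sub>\<infinity>z. V z)) UNIV"
    by (rule has_sum_reindex_bij_witness[where i = "\<lambda>((a, b), (k, l)). ((a - int k, b - int l), (k, l))"
          and j = "\<lambda>((i, j), (k, l)). ((i + int k, j + int l), (k, l))"]) (simp_all add: W_def split_beta)
  ultimately have shifted: "(W has_sum (\<Sum>\<^sub>\<infinity>z. V z)) (UNIV \<times> UNIV)"
    by simp
  show ?thesis
    unfolding V_def[symmetric]
  proof (rule has_sum_Sigma'[OF shifted])
    fix ij :: "int \<times> int"
    obtain i j where ij: "ij = (i, j)"
      by (metis prod.collapse)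
    define c where "c = x powi i * y powi j * q powi (i ^ 2 - i * j + j ^ 2)"
    define f where "f k = euler_coeff q k * (x * q powi (i + 1)) ^ k" for k
    define g where "g l = euler_coeff q l * (y * q powi (j + 1)) ^ l" for l
    have "((\<lambda>(k, l). f k * g l) has_sum (qpoch_inf (x * q powi (i + 1)) q * qpoch_inf (y * q powi (j + 1)) q))
        (UNIV \<times> UNIV)"
      unfolding f_def g_def
      by (rule has_sum_product_abs(1)[OF has_sum_qpoch_inf[OF q] has_sum_qpoch_inf[OF q]
            summable_on_norm_euler[OF q] summable_on_norm_euler[OF q]])
    then have "((\<lambda>kl. c * (\<lambda>(k, l). f k * g l) kl)
        has_sum (c * (qpoch_inf (x * q powi (i + 1)) q * qpoch_inf (y * q powi (j + 1)) q))) UNIV"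
      using has_sum_cmult_right by simp
    moreover have "(\<lambda>kl. c * (\<lambda>(k, l). f k * g l) kl) = (\<lambda>kl. W ((i, j), kl))"
    proof
      fix kl :: "nat \<times> nat"
      obtain k l where kl: "kl = (k, l)"
        by (metis prod.collapse)
      show "c * (\<lambda>(k, l). f k * g l) kl = W ((i, j), kl)"
        unfolding kl W_def V_def using double_euler_term_reindex[OF q0 x0 y0, of i k j l]
        by (simp add: c_def f_def g_def)
    qed
    moreover have "qpoch_inf (x * q powi (i + 1)) q = qpoch_inf (x * q) q / qpoch_int (x * q) q i"
      using qpoch_inf_mult_power_int[OF q q0 x, of i] q0 by (simp add: power_int_add_1' mult_ac)
    moreover have "qpoch_inf (y * q powi (j + 1)) q = qpoch_inf (y * q) q / qpoch_int (y * q) q j"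
      using qpoch_inf_mult_power_int[OF q q0 y, of j] q0 by (simp add: power_int_add_1' mult_ac)
    ultimately show "((\<lambda>kl. W (ij, kl)) has_sum
        ((\<lambda>(i, j). x powi i * y powi j * q powi (i ^ 2 - i * j + j ^ 2)
           / (qpoch_int (x * q) q i * qpoch_int (y * q) q j)
           * (qpoch_inf (x * q) q * qpoch_inf (y * q) q)) ij)) UNIV"
      unfolding ij
      by (simp only: prod.case c_def divide_inverse mult_ac inverse_mult_distrib)
  qed
qed

lemma has_sum_double_euler_diagonal:
  fixes q x y :: complex
  assumes q: "norm q < 1" and q0: "q \<noteq> 0" and x0: "x \<noteq> 0" and y0: "y \<noteq> 0"
  shows "((\<lambda>(a, b). if a = b then x powi a * y powi a * q powi (a ^ 2) * qpoch_inf q q else 0)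
          has_sum (\<Sum>\<^sub>\<infinity>z. (\<lambda>((a, b), (k, l)). double_euler_term q x y a b k l) z)) UNIV"
proof -
  define V where "V = (\<lambda>((a :: int, b :: int), (k :: nat, l :: nat)). double_euler_term q x y a b k l)"
  have abs: "(\<lambda>z. norm (V z)) summable_on UNIV \<times> UNIV"
    using summable_on_norm_double_euler_term[OF q q0 x0 y0] by (simp add: V_def)
  then have "(V has_sum (\<Sum>\<^sub>\<infinity>z. V z)) (UNIV \<times> UNIV)"
    using has_sum_infsum[OF abs_summable_summable] by simp
  then show ?thesis
    unfolding V_def[symmetric]
  proof (rule has_sum_Sigma')
    fix ab :: "int \<times> int"
    obtain a b where ab: "ab = (a, b)"
      by (metis prod.collapse)
    define C where "C k = x powi a * y powi b * q powi (a ^ 2 - a * b + b ^ 2) * euler_coeff q k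
      * q powi (int k * (b - a + 1))" for k
    show "((\<lambda>kl. V (ab, kl)) has_sum
        (\<lambda>(a, b). if a = b then x powi a * y powi a * q powi (a ^ 2) * qpoch_inf q q else 0) ab) UNIV"
    proof (rule has_sum_SigmaI[where A = UNIV and B = "\<lambda>_. UNIV", simplified])
      show "(\<lambda>kl. V (ab, kl)) summable_on UNIV"
        using Infinite_Sum.abs_summable_on_Sigma_iff[THEN iffD1, OF abs] by (blast intro: abs_summable_summable)
      show "((\<lambda>l. V (ab, (k, l))) has_sum (C k * qpoch_inf (q powi (1 - (b - a) - int k)) q)) UNIV" for k
      proof -
        have "V (ab, (k, l)) = C k * (euler_coeff q l * (q powi (1 - (b - a) - int k)) ^ l)" for l
          unfolding V_def ab C_def using double_euler_term_factor[OF q0, of x y a b k l] by simp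
        then show ?thesis
          using has_sum_cmult_right[OF has_sum_qpoch_inf[OF q], of "C k"] by simp
      qed
      show "((\<lambda>k. C k * qpoch_inf (q powi (1 - (b - a) - int k)) q) has_sum
          (\<lambda>(a, b). if a = b then x powi a * y powi a * q powi (a ^ 2) * qpoch_inf q q else 0) ab) UNIV"
        unfolding C_def ab using has_sum_double_euler_fibre[OF q q0, of x a y b] by simp
    qed
  qed
qed

theorem has_sum_quadratic_double_sum:
  fixes q x y :: complex
  assumes q: "norm q < 1" and q0: "q \<noteq> 0" and x0: "x \<noteq> 0" and y0: "y \<noteq> 0"
    and x: "\<And>k. x * q * q ^ k \<noteq> 1" and y: "\<And>k. y * q * q ^ k \<noteq> 1"
  shows "((\<lambda>(i, j). x powi i * y powi j * q powi (i ^ 2 - i * j + j ^ 2)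
              / (qpoch_int (x * q) q i * qpoch_int (y * q) q j))
          has_sum (qpoch_inf q q * theta q (x * y) / (qpoch_inf (x * q) q * qpoch_inf (y * q) q))) UNIV"
proof -
  let ?S = "\<Sum>\<^sub>\<infinity>z. (\<lambda>((a, b), (k, l)). double_euler_term q x y a b k l) z"
  let ?X = "qpoch_inf (x * q) q * qpoch_inf (y * q) q"
  have "((\<lambda>(a, b). if a = b then x powi a * y powi a * q powi (a ^ 2) * qpoch_inf q q else 0)
      has_sum (theta q (x * y) * qpoch_inf q q)) UNIV"
    using has_sum_diagonal_theta[OF q, of "x * y" "qpoch_inf q q"] x0 y0
    by (simp only: power_int_mult_distrib mult_eq_0_iff de_Morgan_disj simp_thms)
  then have "?S = theta q (x * y) * qpoch_inf q q"
    using has_sum_double_euler_diagonal[OF q q0 x0 y0] has_sum_unique by blast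
  moreover have "?X \<noteq> 0"
    using qpoch_inf_nonzero[OF q] x y by (simp add: mult.assoc)
  then have cancel: "inverse ?X * (A * ?X) = A" for A
    by (metis mult.commute mult.left_commute mult_1 right_inverse)
  have "(\<lambda>ij. inverse ?X * (\<lambda>(i, j). x powi i * y powi j * q powi (i ^ 2 - i * j + j ^ 2)
      / (qpoch_int (x * q) q i * qpoch_int (y * q) q j) * ?X) ij)
    = (\<lambda>(i, j). x powi i * y powi j * q powi (i ^ 2 - i * j + j ^ 2)
      / (qpoch_int (x * q) q i * qpoch_int (y * q) q j))"
    by (simp only: fun_eq_iff split_beta cancel) simp
  ultimately show ?thesis
    using has_sum_cmult_right[OF has_sum_double_euler_rows[OF assms], of "inverse ?X"]
    by (simp add: divide_inverse mult_ac)
qed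

lemma quadratic_form_eq_0_iff: "i ^ 2 - i * j + j ^ 2 = (0 :: int) \<longleftrightarrow> i = 0 \<and> j = 0"
proof
  assume "i ^ 2 - i * j + j ^ 2 = 0"
  moreover have "4 * (i ^ 2 - i * j + j ^ 2) = (2 * i - j) ^ 2 + 3 * j ^ 2"
    by (simp add: algebra_simps power2_eq_square)
  ultimately have "(2 * i - j) ^ 2 + 3 * j ^ 2 = 0"
    by simp
  then have "j ^ 2 = 0" and "(2 * i - j) ^ 2 = 0"
    using zero_le_power2[of j] zero_le_power2[of "2 * i - j"] by linarith+
  then show "i = 0 \<and> j = 0"
    by simp
qed simp

theorem theorem1p1:
  fixes q x y :: complex
  assumes "norm q < 1" and "x \<noteq> 0" and "y \<noteq> 0"
    and "\<And>k::nat. k \<ge> 1 \<Longrightarrow> x * q ^ k \<noteq> 1"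
    and "\<And>k::nat. k \<ge> 1 \<Longrightarrow> y * q ^ k \<noteq> 1"
  shows "((\<lambda>(i::int, j::int). x powi i * y powi j * q powi (i^2 - i*j + j^2)
              / (qpoch_int (x * q) q i * qpoch_int (y * q) q j))
          has_sum
          (qpoch_inf q q * qpoch_inf (- x * y * q) (q^2) * qpoch_inf (- q / (x * y)) (q^2)
             * qpoch_inf (q^2) (q^2)
           / (qpoch_inf (x * q) q * qpoch_inf (y * q) q))) UNIV"
proof (cases "q = 0")
  case True
  \<comment> \<open>only the term i = j = 0 survives, and every factor on the right is 1\<close>
  have "((\<lambda>(i::int, j::int). x powi i * y powi j * q powi (i^2 - i*j + j^2)
      / (qpoch_int (x * q) q i * qpoch_int (y * q) q j)) has_sum 1) UNIV"
    by (rule has_sum_finite_neutralI[where B = "{(0, 0)}"])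
       (use True in \<open>auto simp: quadratic_form_eq_0_iff qpoch_int_def\<close>)
  with True show ?thesis
    by (simp add: qpoch_inf_def)
next
  case False
  have "x * q * q ^ k \<noteq> 1" "y * q * q ^ k \<noteq> 1" for k
    using assms(4,5)[of "Suc k"] by (simp_all add: mult.assoc)
  then have "((\<lambda>(i, j). x powi i * y powi j * q powi (i ^ 2 - i * j + j ^ 2)
      / (qpoch_int (x * q) q i * qpoch_int (y * q) q j))
      has_sum (qpoch_inf q q * theta q (x * y) / (qpoch_inf (x * q) q * qpoch_inf (y * q) q))) UNIV"
    using has_sum_quadratic_double_sum[OF assms(1) False assms(2,3)] by blast
  moreover have "theta q (x * y)
      = qpoch_inf (q ^ 2) (q ^ 2) * qpoch_inf (- (x * y) * q) (q ^ 2) * qpoch_inf (- q / (x * y)) (q ^ 2)"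
    using assms(2,3) by (intro jacobi_triple_product[OF assms(1) False]) simp
  ultimately show ?thesis
    by (simp add: mult_ac)
qed

end
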